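(* There is an uncountable collection $\mathcal{C}_1$ of classification functions $f:[0,1]^d\to\{0,1\}$ (with fixed $d\geq 2$) such that the following holds. For any neural network dimensions $\mathbf{N}=(N_L=1,N_{L-1},\dots,N_1,N_0=d)$ with $L\geq 2$, any integer $r\geq 3(N_1+1)\cdots(N_{L-1}+1)$, any $\epsilon>0$, $\hat\epsilon\in(0,1/2)$ and cost function $\mathcal{R}\in\mathcal{CF}^{\epsilon,\hat\epsilon}_r$, any randomised algorithm $\Gamma$, and any $\mathrm{p}\in[0,1/2)$, there is an uncountable collection $\mathcal{C}_2$ of training sets $\mathcal{T}=\{x^1,\dots,x^r\}\in\mathcal{S}^f_{\varepsilon'(r)}$ such that for each $\mathcal{T}\in\mathcal{C}_2$ the set $$\operatorname{argmin}_{\epsilon,\ \varphi\in\mathcal{NN}_{\mathbf{N},L}}\mathcal{R}\big(\{\varphi(x^j)\}_{j=1}^r,\{f(x^j)\}_{j=1}^r\big)$$ is nonempty, and yet $\Gamma$ applied to $\mathcal{T}$ fails to compute any $\phi$ in this set in the following sense: there is an admissible oracle for $\mathcal{T}$ such that, for every $\phi$ in this set, $$\mathbb{P}\Big(\|\Gamma(\mathcal{T})-\{\phi(x^j)\}_{j=1}^r\|_*\geq 1/4-3\hat\epsilon/4\Big)>\mathrm{p},$$ where $*=1,2$ or $\infty$.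
   Context: A ReLU neural network with dimensions $(\mathbf{N},L)$ is a map $\varphi=W^L\rho W^{L-1}\rho\cdots\rho W^1:\mathbb{R}^d\to\mathbb{R}$ with affine $W^\ell:\mathbb{R}^{N_{\ell-1}}\to\mathbb{R}^{N_\ell}$ and $\rho(t)=\max\{0,t\}$ applied coordinatewise; $\mathcal{NN}_{\mathbf{N},L}$ is the set of these. $\mathcal{CF}_r$ is the set of $\mathcal{R}:\mathbb{R}^r\times\mathbb{R}^r\to\mathbb{R}_+\cup\{\infty\}$ with $\mathcal{R}(v,w)=0$ iff $v=w$, and $\mathcal{CF}^{\epsilon,\hat\epsilon}_r=\{\mathcal{R}\in\mathcal{CF}_r:\mathcal{R}(v,w)\leq\epsilon\Rightarrow\|v-w\|_\infty\leq\hat\epsilon\}$. For $g$ defined on a set $X$, $\operatorname{argmin}_{\epsilon,\,x\in X} g(x)=\{x\in X: g(x)\leq g(y)+\epsilon\ \forall y\in X\}$. For a classification function $f$ and $\delta>0$, $\mathcal{S}^f_\delta$ is the family of finite sets $\{x^1,\dots,x^m\}\subset[0,1]^d$ with $\min_{x^i\neq x^j}\|x^i-x^j\|_\infty\geq2\delta$ and $f(x^j+y)=f(x^j)$ whenever $\|y\|_\infty<\delta$. $\varepsilon'(n)=[(4n+3)(4n+4)]^{-1}$. A randomised algorithm is a randomised Turing or Blum–Shub–Smale machine which accesses the training set $\mathcal{T}=\{x^1,\dots,x^r\}$ only through an oracle: for any $k\in\mathbb{N}$ it may request vectors $x^{1,k},\dots,x^{r,k}$ with $\|x^{i,k}-x^i\|_\infty\leq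 2^{-k}$ (with dyadic entries of precision $2^{-k}$); an oracle is admissible if it satisfies these bounds, and the algorithm must be defined for every admissible oracle. It outputs a vector $\Gamma(\mathcal{T})\in\mathbb{R}^r$; probabilities are over the algorithm's internal randomness. *)

theory Defs
  imports "HOL-Probability.Probability"
begin

text \<open>Points of R^k are represented as real lists of length k.\<close>

definition cube :: "nat \<Rightarrow> real list set" where
  "cube d = {x. length x = d \<and> (\<forall>t\<in>set x. 0 \<le> t \<and> t \<le> 1)}"

definition vsub :: "real list \<Rightarrow> real list \<Rightarrow> real list" where
  "vsub v w = map2 (-) v w"

definition linf :: "real list \<Rightarrow> real" where
  "linf v = Max (insert 0 (abs ` set v))"

definition lone :: "real list \<Rightarrow> real" where
  "lone v = sum_list (map abs v)"

definition ltwo :: "real list \<Rightarrow> real" where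
  "ltwo v = sqrt (sum_list (map (\<lambda>t. t^2) v))"

definition classification_fn :: "nat \<Rightarrow> (real list \<Rightarrow> real) \<Rightarrow> bool" where
  "classification_fn d f \<longleftrightarrow> (\<forall>x\<in>cube d. f x \<in> {0,1})"

text \<open>Neural networks: affine layers (W,b), W given by its rows.\<close>
definition affine :: "real list list \<times> real list \<Rightarrow> real list \<Rightarrow> real list" where
  "affine l v = map2 (\<lambda>row c. sum_list (map2 (*) row v) + c) (fst l) (snd l)"

definition relu :: "real list \<Rightarrow> real list" where
  "relu v = map (\<lambda>t. max 0 t) v"

fun net_eval :: "(real list list \<times> real list) list \<Rightarrow> real list \<Rightarrow> real list" where
  "net_eval [] v = v"
| "net_eval [l] v = affine l v"
| "net_eval (l # l' # ls) v = net_eval (l' # ls) (relu (affine l v))"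

definition layers_ok :: "nat list \<Rightarrow> (real list list \<times> real list) list \<Rightarrow> bool" where
  "layers_ok ds ps \<longleftrightarrow> length ps + 1 = length ds \<and>
     (\<forall>i < length ps. length (fst (ps!i)) = ds!(i+1) \<and> length (snd (ps!i)) = ds!(i+1)
        \<and> (\<forall>row\<in>set (fst (ps!i)). length row = ds!i))"

text \<open>NN_{N,L} with N = (1, N_{L-1}, ..., N_1, d); Ns = [N_1,...,N_{L-1}], L = length Ns + 1.\<close>
definition NN :: "nat \<Rightarrow> nat list \<Rightarrow> (real list \<Rightarrow> real) set" where
  "NN d Ns = {\<phi>. \<exists>ps. layers_ok (d # Ns @ [1]) ps \<and> \<phi> = (\<lambda>x. hd (net_eval ps x))}"

definition CF :: "nat \<Rightarrow> (real list \<Rightarrow> real list \<Rightarrow> ennreal) set" where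
  "CF r = {R. \<forall>v w. length v = r \<longrightarrow> length w = r \<longrightarrow> (R v w = 0 \<longleftrightarrow> v = w)}"

definition CF_eps :: "nat \<Rightarrow> real \<Rightarrow> real \<Rightarrow> (real list \<Rightarrow> real list \<Rightarrow> ennreal) set" where
  "CF_eps r \<epsilon> \<epsilon>h = {R \<in> CF r. \<forall>v w. length v = r \<longrightarrow> length w = r \<longrightarrow>
      R v w \<le> ennreal \<epsilon> \<longrightarrow> linf (vsub v w) \<le> \<epsilon>h}"

definition argmin_eps :: "real \<Rightarrow> 'a set \<Rightarrow> ('a \<Rightarrow> ennreal) \<Rightarrow> 'a set" where
  "argmin_eps \<epsilon> X g = {x\<in>X. \<forall>y\<in>X. g x \<le> g y + ennreal \<epsilon>}"

text \<open>S^f_delta, training sets as duplicate-free lists (ordering x^1,...,x^m).\<close>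
definition S :: "(real list \<Rightarrow> real) \<Rightarrow> nat \<Rightarrow> real \<Rightarrow> real list list set" where
  "S f d \<delta> = {xs. distinct xs \<and> set xs \<subseteq> cube d
      \<and> (\<forall>x\<in>set xs. \<forall>y\<in>set xs. x \<noteq> y \<longrightarrow> linf (vsub x y) \<ge> 2 * \<delta>)
      \<and> (\<forall>x\<in>set xs. \<forall>z\<in>cube d. linf (vsub z x) < \<delta> \<longrightarrow> f z = f x)}"

definition eps' :: "nat \<Rightarrow> real" where
  "eps' n = 1 / ((4 * real n + 3) * (4 * real n + 4))"

text \<open>Oracle: Or k i = x^{i,k}, a dyadic approximation of precision 2^-k.\<close>
definition admissible_oracle :: "nat \<Rightarrow> real list list \<Rightarrow> (nat \<Rightarrow> nat \<Rightarrow> real list) \<Rightarrow> bool" where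
  "admissible_oracle d T Or \<longleftrightarrow>
     (\<forall>k i. i < length T \<longrightarrow> length (Or k i) = d \<and>
        (\<forall>l < d. \<bar>Or k i ! l - T ! i ! l\<bar> \<le> (1/2)^k \<and> (\<exists>m::int. Or k i ! l = of_int m / 2^k)))
   \<and> (\<forall>k i. length T \<le> i \<longrightarrow> Or k i = [])"

text \<open>Randomised (general) algorithm on training sets of r points in [0,1]^d:
  random seed (coin sequence) omega drawn from a probability measure M; for each seed the
  output depends only on finitely many oracle answers; outputs are measurable in omega.\<close>
definition randomised_algorithm ::
  "(nat \<Rightarrow> bool) measure \<Rightarrow> nat \<Rightarrow> nat \<Rightarrow> ((nat \<Rightarrow> bool) \<Rightarrow> (nat \<Rightarrow> nat \<Rightarrow> real list) \<Rightarrow> real list) \<Rightarrow> bool" where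
  "randomised_algorithm M d r \<Gamma> \<longleftrightarrow> prob_space M \<and>
    (\<forall>T Or. length T = r \<and> set T \<subseteq> cube d \<and> admissible_oracle d T Or \<longrightarrow>
       (\<forall>\<omega>\<in>space M. length (\<Gamma> \<omega> Or) = r) \<and>
       (\<forall>i<r. (\<lambda>\<omega>. \<Gamma> \<omega> Or ! i) \<in> borel_measurable M) \<and>
       (\<forall>\<omega>\<in>space M. \<exists>\<Lambda>::(nat \<times> nat) set. finite \<Lambda> \<and>
          (\<forall>T' Or'. length T' = r \<and> set T' \<subseteq> cube d \<and> admissible_oracle d T' Or'
             \<and> (\<forall>(k,i)\<in>\<Lambda>. Or' k i = Or k i) \<longrightarrow> \<Gamma> \<omega> Or' = \<Gamma> \<omega> Or)))"

end

(* The classification functions are, up to a single exceptional point that makes them pairwise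
   distinct, x \<mapsto> [\<lfloor>1 / x_1\<rfloor> is even]. A training set consists of r \<ge> 3 \<Prod>(N_i + 1) points whose
   first coordinates are the midpoints of the cells ]1/(m+1), 1/m[, m = r, ..., 2r - 1, so that
   their labels alternate.

   If all points have the same second coordinate y, they lie on a line. Along a line a ReLU network
   with hidden widths N_1, ..., N_(L-1) is piecewise affine with fewer than \<Prod>(N_i + 1) breakpoints,
   so three consecutive training points lie on one affine piece and the network misses one of
   their alternating labels by at least 1/2. If instead the points labelled 0 are moved down by
   s > 0, a single ReLU neuron interpolates, so every \<epsilon>-minimiser of the cost is \<epsilon>h-close to
   the labels.

   Either the algorithm fails on all line training sets with y \<in> ]1/4, 3/4[, or it succeeds on
   one of them, T0. In the second case, with probability > 2p it only reads oracle answers up to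
   some precision K. For s \<le> 2^-(K+1) the perturbed set has an admissible oracle that agrees with
   the rounding oracle of T0 up to precision K, so on those seeds the output is the same as for
   T0: close to a network that misfits T0, hence at distance at least 1/4 - 3\<epsilon>h/4 from every
   near minimiser for the perturbed set. *)
theory Submission
  imports Defs
begin

section \<open>Piecewise affine functions of one variable\<close>

definition piecewise_affine :: "real set \<Rightarrow> (real \<Rightarrow> real) \<Rightarrow> bool" where
  "piecewise_affine B g \<longleftrightarrow> (\<forall>a b. a \<le> b \<longrightarrow> B \<inter> {a<..<b} = {} \<longrightarrow>
      (\<exists>\<alpha> \<beta>. \<forall>t\<in>{a..b}. g t = \<alpha> * t + \<beta>))"

lemma piecewise_affineD:
  "piecewise_affine B g \<Longrightarrow> a \<le> b \<Longrightarrow> B \<inter> {a<..<b} = {} \<Longrightarrow> \<exists>\<alpha> \<beta>. \<forall>t\<in>{a..b}. g t = \<alpha> * t + \<beta>"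
  unfolding piecewise_affine_def by blast

lemma piecewise_affine_subset: "piecewise_affine B g \<Longrightarrow> B \<subseteq> C \<Longrightarrow> piecewise_affine C g"
  unfolding piecewise_affine_def by blast

lemma piecewise_affine_const: "piecewise_affine B (\<lambda>t. c)"
  unfolding piecewise_affine_def by (intro allI impI exI[of _ 0] exI[of _ c]) simp

lemma piecewise_affine_ident: "piecewise_affine B (\<lambda>t. t)"
  unfolding piecewise_affine_def by (intro allI impI exI[of _ 1] exI[of _ 0]) simp

lemma piecewise_affine_add:
  assumes g: "piecewise_affine B g" and h: "piecewise_affine B h"
  shows "piecewise_affine B (\<lambda>t. g t + h t)"
  unfolding piecewise_affine_def
proof (intro allI impI)
  fix a b :: real assume ab: "a \<le> b" "B \<inter> {a<..<b} = {}"
  obtain \<alpha> \<beta> where "\<forall>t\<in>{a..b}. g t = \<alpha> * t + \<beta>"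
    using piecewise_affineD[OF g ab] by blast
  moreover obtain \<alpha>' \<beta>' where "\<forall>t\<in>{a..b}. h t = \<alpha>' * t + \<beta>'"
    using piecewise_affineD[OF h ab] by blast
  ultimately have "\<forall>t\<in>{a..b}. g t + h t = (\<alpha> + \<alpha>') * t + (\<beta> + \<beta>')" by (simp add: algebra_simps)
  then show "\<exists>\<alpha> \<beta>. \<forall>t\<in>{a..b}. g t + h t = \<alpha> * t + \<beta>" by blast
qed

lemma piecewise_affine_cmult:
  assumes g: "piecewise_affine B g"
  shows "piecewise_affine B (\<lambda>t. c * g t)"
  unfolding piecewise_affine_def
proof (intro allI impI)
  fix a b :: real assume ab: "a \<le> b" "B \<inter> {a<..<b} = {}"
  obtain \<alpha> \<beta> where "\<forall>t\<in>{a..b}. g t = \<alpha> * t + \<beta>"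
    using piecewise_affineD[OF g ab] by blast
  then have "\<forall>t\<in>{a..b}. c * g t = (c * \<alpha>) * t + c * \<beta>" by (simp add: algebra_simps)
  then show "\<exists>\<alpha> \<beta>. \<forall>t\<in>{a..b}. c * g t = \<alpha> * t + \<beta>" by blast
qed

lemma piecewise_affine_sum:
  "finite I \<Longrightarrow> (\<And>i. i \<in> I \<Longrightarrow> piecewise_affine B (g i)) \<Longrightarrow> piecewise_affine B (\<lambda>t. \<Sum>i\<in>I. g i t)"
  by (induction I rule: finite_induct) (auto intro: piecewise_affine_add piecewise_affine_const)

text \<open>The breakpoints that a ReLU adds to a function that is affine between the points of \<open>B\<close>.\<close>
definition relu_kinks :: "real set \<Rightarrow> (real \<Rightarrow> real) \<Rightarrow> real set" where
  "relu_kinks B h = {t. t \<notin> B \<and> h t = 0 \<and> \<not> (\<exists>e>0. \<forall>s. \<bar>s - t\<bar> < e \<longrightarrow> h s = 0)}"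

lemma sign_change_gives_relu_kink:
  assumes aff: "\<forall>t\<in>{a..b}. h t = \<alpha> * t + \<beta>" and B: "B \<inter> {a<..<b} = {}"
    and t: "t1 \<in> {a..b}" "t2 \<in> {a..b}" "h t1 < 0" "0 < h t2"
  shows "relu_kinks B h \<inter> {a<..<b} \<noteq> {}"
proof -
  have ht: "h t1 = \<alpha> * t1 + \<beta>" "h t2 = \<alpha> * t2 + \<beta>" using aff t by auto
  then have "\<alpha> \<noteq> 0" using t by auto
  define z where "z = - \<beta> / \<alpha>"
  have hz: "\<alpha> * z + \<beta> = 0" using \<open>\<alpha> \<noteq> 0\<close> by (simp add: z_def)
  have "\<alpha> * t1 < \<alpha> * z" "\<alpha> * z < \<alpha> * t2" using ht t hz by linarith+
  then have "t1 < z \<and> z < t2 \<or> t2 < z \<and> z < t1" by (auto simp: mult_less_cancel_left)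
  then have z: "a < z" "z < b" using t by auto
  have "\<exists>s. \<bar>s - z\<bar> < e \<and> h s \<noteq> 0" if "e > 0" for e
  proof -
    define m where "m = min e (b - z)"
    define s where "s = z + m / 2"
    have "0 < m" "m \<le> e" "m \<le> b - z" using that z by (auto simp: m_def)
    then have "\<bar>s - z\<bar> < e" "s \<in> {a..b}" "s \<noteq> z" using z by (auto simp: s_def)
    moreover have "\<alpha> * s + \<beta> \<noteq> 0"
    proof
      assume "\<alpha> * s + \<beta> = 0"
      then have "\<alpha> * s = \<alpha> * z" using hz by linarith
      then show False using \<open>s \<noteq> z\<close> \<open>\<alpha> \<noteq> 0\<close> by simp
    qed
    ultimately have "\<bar>s - z\<bar> < e \<and> h s \<noteq> 0" using aff by simp
    then show ?thesis by blast
  qed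
  moreover have "z \<notin> B" "h z = 0" using B z aff hz by auto
  ultimately have "z \<in> relu_kinks B h" unfolding relu_kinks_def by blast
  then show ?thesis using z by auto
qed

lemma piecewise_affine_relu:
  assumes h: "piecewise_affine B h"
  shows "piecewise_affine (B \<union> relu_kinks B h) (\<lambda>t. max 0 (h t))"
  unfolding piecewise_affine_def
proof (intro allI impI)
  fix a b :: real assume ab: "a \<le> b" "(B \<union> relu_kinks B h) \<inter> {a<..<b} = {}"
  then have B: "B \<inter> {a<..<b} = {}" by blast
  obtain \<alpha> \<beta> where aff: "\<forall>t\<in>{a..b}. h t = \<alpha> * t + \<beta>"
    using piecewise_affineD[OF h ab(1) B] by blast
  have "(\<forall>t\<in>{a..b}. 0 \<le> h t) \<or> (\<forall>t\<in>{a..b}. h t \<le> 0)"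
  proof (rule ccontr)
    assume "\<not> ?thesis"
    then obtain t1 t2 where "t1 \<in> {a..b}" "t2 \<in> {a..b}" "h t1 < 0" "0 < h t2" by (auto simp: not_le)
    then have "relu_kinks B h \<inter> {a<..<b} \<noteq> {}" by (rule sign_change_gives_relu_kink[OF aff B])
    then show False using ab(2) by blast
  qed
  then show "\<exists>\<alpha> \<beta>. \<forall>t\<in>{a..b}. max 0 (h t) = \<alpha> * t + \<beta>"
  proof
    assume "\<forall>t\<in>{a..b}. 0 \<le> h t"
    then show ?thesis using aff by (intro exI[of _ \<alpha>] exI[of _ \<beta>]) simp
  next
    assume "\<forall>t\<in>{a..b}. h t \<le> 0"
    then show ?thesis by (intro exI[of _ 0]) simp
  qed
qed

lemma relu_kinks_separated:
  assumes fin: "finite B" and h: "piecewise_affine B h"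
    and t: "t \<in> relu_kinks B h" and t': "t' \<in> relu_kinks B h" and lt: "t < t'"
  shows "\<exists>b\<in>B. t < b \<and> b < t'"
proof (rule ccontr)
  assume none: "\<not> ?thesis"
  have "t \<notin> B" "h t = 0" "h t' = 0" and not_loc: "\<not> (\<exists>e>0. \<forall>s. \<bar>s - t\<bar> < e \<longrightarrow> h s = 0)"
    using t t' by (auto simp: relu_kinks_def)
  have "open (- B)" using finite_imp_closed[OF fin] by (simp add: open_Compl)
  then have "\<exists>e>0. ball t e \<subseteq> - B" using \<open>t \<notin> B\<close> open_contains_ball_eq by blast
  then obtain e where e: "e > 0" "ball t e \<subseteq> - B" by blast
  have "B \<inter> {t - e<..<t'} = {}"
  proof -
    have "x \<notin> B" if "t - e < x" "x < t'" for x
    proof (cases "x \<le> t")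
      case True
      then have "x \<in> ball t e" using that by (simp add: dist_real_def)
      then show ?thesis using e(2) by blast
    next
      case False
      then show ?thesis using none that by auto
    qed
    then show ?thesis by auto
  qed
  moreover have "t - e \<le> t'" using e lt by simp
  ultimately obtain \<alpha> \<beta> where aff: "\<forall>s\<in>{t - e..t'}. h s = \<alpha> * s + \<beta>"
    using piecewise_affineD[OF h] by blast
  have zeros: "\<alpha> * t + \<beta> = 0" "\<alpha> * t' + \<beta> = 0"
    using aff \<open>h t = 0\<close> \<open>h t' = 0\<close> e lt by auto
  have "\<alpha> * (t' - t) = (\<alpha> * t' + \<beta>) - (\<alpha> * t + \<beta>)" by (simp add: algebra_simps)
  then have "\<alpha> * (t' - t) = 0" using zeros by simp
  then have "\<alpha> = 0" using lt by simp
  moreover have "\<beta> = 0" using zeros \<open>\<alpha> = 0\<close> by simp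
  ultimately have "\<forall>s. \<bar>s - t\<bar> < min e (t' - t) \<longrightarrow> h s = 0" using aff by (auto simp: abs_less_iff)
  moreover have "min e (t' - t) > 0" using e lt by simp
  ultimately show False using not_loc by blast
qed

lemma finite_card_relu_kinks:
  assumes fin: "finite B" and h: "piecewise_affine B h"
  shows "finite (relu_kinks B h) \<and> card (relu_kinks B h) \<le> card B + 1"
proof -
  let ?rank = "\<lambda>t. card {b\<in>B. b < t}"
  have rank_less: "?rank t < ?rank t'"
    if kinks: "t \<in> relu_kinks B h" "t' \<in> relu_kinks B h" "t < t'" for t t'
  proof -
    obtain b where "b \<in> B" "t < b" "b < t'" using relu_kinks_separated[OF fin h kinks] by blast
    then have "b \<in> {b\<in>B. b < t'} - {b\<in>B. b < t}" by simp
    moreover have "{b\<in>B. b < t} \<subseteq> {b\<in>B. b < t'}" using \<open>t < t'\<close> by auto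
    ultimately have "{b\<in>B. b < t} \<subset> {b\<in>B. b < t'}" by blast
    then show ?thesis using fin by (intro psubset_card_mono) simp_all
  qed
  have "strict_mono_on (relu_kinks B h) ?rank" by (rule strict_mono_onI) (rule rank_less)
  then have inj: "inj_on ?rank (relu_kinks B h)" by (rule strict_mono_on_imp_inj_on)
  have img: "?rank ` relu_kinks B h \<subseteq> {0..card B}"
    using fin by (auto simp: card_mono)
  have "finite (relu_kinks B h)" by (rule inj_on_finite[OF inj img]) simp
  moreover have "card (relu_kinks B h) \<le> card {0..card B}"
    by (rule card_inj_on_le[OF inj img]) simp
  ultimately show ?thesis by simp
qed

section \<open>Networks along a line\<close>

definition piecewise_affine_list :: "real set \<Rightarrow> nat \<Rightarrow> (real \<Rightarrow> real list) \<Rightarrow> bool" where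
  "piecewise_affine_list B n V \<longleftrightarrow>
     (\<forall>t. length (V t) = n) \<and> (\<forall>j<n. piecewise_affine B (\<lambda>t. V t ! j))"

lemma layers_ok_Cons:
  "layers_ok (a # b # ds) (p # ps) \<longleftrightarrow>
     length (fst p) = b \<and> length (snd p) = b \<and> (\<forall>row\<in>set (fst p). length row = a) \<and>
     layers_ok (b # ds) ps"
  unfolding layers_ok_def by (auto simp: All_less_Suc2)

lemma layers_ok_single:
  "layers_ok [a, b] [p] \<longleftrightarrow>
     length (fst p) = b \<and> length (snd p) = b \<and> (\<forall>row\<in>set (fst p). length row = a)"
  unfolding layers_ok_def by auto

lemma piecewise_affine_list_line:
  "2 \<le> d \<Longrightarrow> piecewise_affine_list {} d (\<lambda>t. [t, y] @ replicate (d - 2) 0)"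
  unfolding piecewise_affine_list_def
proof (intro conjI allI impI)
  fix j
  show "piecewise_affine {} (\<lambda>t. ([t, y] @ replicate (d - 2) 0) ! j)"
    by (cases j) (simp_all add: piecewise_affine_ident piecewise_affine_const)
qed simp

lemma piecewise_affine_list_affine:
  assumes V: "piecewise_affine_list B n V"
    and l: "length (fst l) = m" "length (snd l) = m" "\<forall>row\<in>set (fst l). length row = n"
  shows "piecewise_affine_list B m (\<lambda>t. affine l (V t))"
  unfolding piecewise_affine_list_def
proof (intro conjI allI impI)
  fix t show "length (affine l (V t)) = m" using l by (simp add: affine_def)
next
  fix j assume j: "j < m"
  have row: "length (fst l ! j) = n" using l j by auto
  have len: "length (V t) = n" for t using V by (simp add: piecewise_affine_list_def)
  have "affine l (V t) ! j = (\<Sum>i<n. (fst l ! j) ! i * V t ! i) + snd l ! j" for t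
    using j l row len[of t] by (simp add: affine_def sum_list_sum_nth atLeast0LessThan)
  moreover have "piecewise_affine B (\<lambda>t. (\<Sum>i<n. (fst l ! j) ! i * V t ! i) + snd l ! j)"
    using V by (intro piecewise_affine_add piecewise_affine_sum piecewise_affine_cmult
        piecewise_affine_const) (auto simp: piecewise_affine_list_def)
  ultimately show "piecewise_affine B (\<lambda>t. affine l (V t) ! j)" by simp
qed

lemma piecewise_affine_list_relu:
  assumes V: "piecewise_affine_list B m V" and fin: "finite B"
  shows "\<exists>B'. finite B' \<and> card B' + 1 \<le> (card B + 1) * (m + 1) \<and>
    piecewise_affine_list B' m (\<lambda>t. relu (V t))"
proof -
  define Z where "Z = (\<Union>j<m. relu_kinks B (\<lambda>t. V t ! j))"
  have kinks: "finite (relu_kinks B (\<lambda>t. V t ! j)) \<and> card (relu_kinks B (\<lambda>t. V t ! j)) \<le> card B + 1"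
    if "j < m" for j
    using finite_card_relu_kinks[OF fin] V that by (auto simp: piecewise_affine_list_def)
  have "finite Z" using kinks by (auto simp: Z_def)
  have "card Z \<le> (\<Sum>j<m. card (relu_kinks B (\<lambda>t. V t ! j)))"
    unfolding Z_def by (rule card_UN_le) simp
  also have "\<dots> \<le> (\<Sum>j<m. card B + 1)" using kinks by (intro sum_mono) auto
  finally have "card (B \<union> Z) + 1 \<le> (card B + 1) * (m + 1)"
    using card_Un_le[of B Z] by (simp add: algebra_simps)
  moreover have "piecewise_affine_list (B \<union> Z) m (\<lambda>t. relu (V t))"
    unfolding piecewise_affine_list_def
  proof (intro conjI allI impI)
    fix t show "length (relu (V t)) = m" using V by (simp add: piecewise_affine_list_def relu_def)
  next
    fix j assume j: "j < m"
    have "piecewise_affine (B \<union> relu_kinks B (\<lambda>t. V t ! j)) (\<lambda>t. max 0 (V t ! j))"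
      using V j by (intro piecewise_affine_relu) (auto simp: piecewise_affine_list_def)
    then have "piecewise_affine (B \<union> Z) (\<lambda>t. max 0 (V t ! j))"
      by (rule piecewise_affine_subset) (use j in \<open>auto simp: Z_def\<close>)
    then show "piecewise_affine (B \<union> Z) (\<lambda>t. relu (V t) ! j)"
      using V j by (simp add: piecewise_affine_list_def relu_def)
  qed
  ultimately show ?thesis using fin \<open>finite Z\<close> by blast
qed

lemma piecewise_affine_list_net_eval:
  "layers_ok (n0 # Ns @ [1]) ps \<Longrightarrow> piecewise_affine_list B n0 V \<Longrightarrow> finite B \<Longrightarrow>
     \<exists>B'. finite B' \<and> card B' + 1 \<le> (card B + 1) * prod_list (map Suc Ns) \<and>
          piecewise_affine_list B' 1 (\<lambda>t. net_eval ps (V t))"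
proof (induction ps arbitrary: n0 Ns B V rule: induct_list012)
  case 1
  then show ?case by (simp add: layers_ok_def)
next
  case (2 l)
  then have "Ns = []" by (simp add: layers_ok_def)
  with 2 have "piecewise_affine_list B 1 (\<lambda>t. affine l (V t))"
    by (intro piecewise_affine_list_affine) (auto simp: layers_ok_single)
  then show ?case using 2 \<open>Ns = []\<close> by auto
next
  case (3 l l' ls)
  obtain N1 Ns' where Ns: "Ns = N1 # Ns'"
    using "3.prems"(1) by (cases Ns) (auto simp: layers_ok_def)
  have l: "length (fst l) = N1" "length (snd l) = N1" "\<forall>row\<in>set (fst l). length row = n0"
    and layers: "layers_ok (N1 # Ns' @ [1]) (l' # ls)"
    using "3.prems"(1) by (simp_all add: Ns layers_ok_Cons)
  obtain B1 where B1: "finite B1" "card B1 + 1 \<le> (card B + 1) * (N1 + 1)"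
    "piecewise_affine_list B1 N1 (\<lambda>t. relu (affine l (V t)))"
    using piecewise_affine_list_relu[OF piecewise_affine_list_affine[OF "3.prems"(2) l] "3.prems"(3)]
    by blast
  obtain B' where B': "finite B'" "card B' + 1 \<le> (card B1 + 1) * prod_list (map Suc Ns')"
    "piecewise_affine_list B' 1 (\<lambda>t. net_eval (l' # ls) (relu (affine l (V t))))"
    using "3.IH"(2)[OF layers B1(3) B1(1)] by blast
  have "card B' + 1 \<le> (card B + 1) * (N1 + 1) * prod_list (map Suc Ns')"
    using B'(2) B1(2) by (meson le_trans mult_le_mono1)
  then show ?case using B' by (auto simp: Ns algebra_simps)
qed

lemma affine_misfits_alternating_triple:
  fixes g :: "real \<Rightarrow> real"
  assumes aff: "\<forall>t\<in>{u2..u0}. g t = \<alpha> * t + \<beta>" and u: "u2 < u1" "u1 < u0" and L: "L \<in> {0, 1}"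
  shows "1/2 \<le> \<bar>g u0 - L\<bar> \<or> 1/2 \<le> \<bar>g u1 - (1 - L)\<bar> \<or> 1/2 \<le> \<bar>g u2 - L\<bar>"
proof -
  have g: "g u0 = \<alpha> * u0 + \<beta>" "g u1 = \<alpha> * u1 + \<beta>" "g u2 = \<alpha> * u2 + \<beta>" using aff u by auto
  have "min (g u0) (g u2) \<le> g u1 \<and> g u1 \<le> max (g u0) (g u2)"
  proof (cases "\<alpha> \<ge> 0")
    case True
    then have "\<alpha> * u2 \<le> \<alpha> * u1" "\<alpha> * u1 \<le> \<alpha> * u0" using u by (auto intro: mult_left_mono)
    then show ?thesis using g by auto
  next
    case False
    then have "\<alpha> * u1 \<le> \<alpha> * u2" "\<alpha> * u0 \<le> \<alpha> * u1" using u by (auto intro: mult_left_mono_neg)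
    then show ?thesis using g by auto
  qed
  then show ?thesis using L by (auto simp: min_def max_def abs_if split: if_splits)
qed

lemma finite_set_avoids_some_gap:
  fixes u :: "nat \<Rightarrow> real"
  assumes fin: "finite B" and card: "card B < K" and dec: "\<And>i j. i < j \<Longrightarrow> u j < u i"
  shows "\<exists>k<K. B \<inter> {u (2*k+2)<..<u (2*k)} = {}"
proof (rule ccontr)
  assume "\<not> ?thesis"
  then have "\<forall>k. \<exists>b. k < K \<longrightarrow> b \<in> B \<and> u (2*k+2) < b \<and> b < u (2*k)"
    by (auto simp: disjoint_iff)
  then obtain b where b: "\<And>k. k < K \<Longrightarrow> b k \<in> B \<and> u (2*k+2) < b k \<and> b k < u (2*k)" by metis
  have less: "b k' < b k" if "k < k'" "k' < K" for k k'
  proof -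
    have "u (2*k') \<le> u (2*k+2)" using dec[of "2*k+2" "2*k'"] that by (cases "2*k' = 2*k+2") auto
    then show ?thesis using b[of k] b[of k'] that by auto
  qed
  have "inj_on b {..<K}"
  proof (rule inj_onI)
    fix k k' assume "k \<in> {..<K}" "k' \<in> {..<K}" "b k = b k'"
    then show "k = k'" using less[of k k'] less[of k' k] by (cases k k' rule: linorder_cases) auto
  qed
  then have "card {..<K} \<le> card B" using b fin by (intro card_inj_on_le) auto
  then show False using card by simp
qed

lemma piecewise_affine_misfits_alternating:
  fixes u lbl :: "nat \<Rightarrow> real"
  assumes g: "piecewise_affine B g" and fin: "finite B" and card: "card B < K"
    and dec: "\<And>i j. i < j \<Longrightarrow> u j < u i"
    and lbl: "\<And>i. lbl i \<in> {0, 1}" "\<And>i. lbl (Suc i) = 1 - lbl i"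
  shows "\<exists>j\<le>2*K. 1/2 \<le> \<bar>g (u j) - lbl j\<bar>"
proof -
  obtain k where k: "k < K" "B \<inter> {u (2*k+2)<..<u (2*k)} = {}"
    using finite_set_avoids_some_gap[where u = u, OF fin card dec] by blast
  have ord: "u (2*k+2) < u (2*k+1)" "u (2*k+1) < u (2*k)"
    using dec[of "2*k+1" "2*k+2"] dec[of "2*k" "2*k+1"] by simp_all
  then have "u (2*k+2) \<le> u (2*k)" by linarith
  then obtain \<alpha> \<beta> where aff: "\<forall>t\<in>{u (2*k+2)..u (2*k)}. g t = \<alpha> * t + \<beta>"
    using piecewise_affineD[OF g _ k(2)] by blast
  have lbl_next: "lbl (2*k+1) = 1 - lbl (2*k)" "lbl (2*k+2) = lbl (2*k)"
    using lbl(2)[of "2*k"] lbl(2)[of "2*k+1"] by simp_all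
  have le: "2*k \<le> 2*K" "2*k+1 \<le> 2*K" "2*k+2 \<le> 2*K" using k(1) by simp_all
  from affine_misfits_alternating_triple[OF aff ord lbl(1)[of "2*k"]] show ?thesis
  proof (elim disjE)
    assume "1/2 \<le> \<bar>g (u (2*k)) - lbl (2*k)\<bar>"
    then show ?thesis using le(1) by blast
  next
    assume "1/2 \<le> \<bar>g (u (2*k+1)) - (1 - lbl (2*k))\<bar>"
    then show ?thesis using le(2) unfolding lbl_next(1)[symmetric] by blast
  next
    assume "1/2 \<le> \<bar>g (u (2*k+2)) - lbl (2*k)\<bar>"
    then show ?thesis using le(3) unfolding lbl_next(2)[symmetric] by blast
  qed
qed

lemma NN_misfits_alternating_on_line:
  fixes u lbl :: "nat \<Rightarrow> real"
  assumes d: "2 \<le> d" and \<phi>: "\<phi> \<in> NN d Ns" and K: "prod_list (map Suc Ns) \<le> K"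
    and dec: "\<And>i j. i < j \<Longrightarrow> u j < u i"
    and lbl: "\<And>i. lbl i \<in> {0, 1}" "\<And>i. lbl (Suc i) = 1 - lbl i"
  shows "\<exists>j\<le>2*K. 1/2 \<le> \<bar>\<phi> ([u j, y] @ replicate (d - 2) 0) - lbl j\<bar>"
proof -
  obtain ps where ps: "layers_ok (d # Ns @ [1]) ps" "\<phi> = (\<lambda>x. hd (net_eval ps x))"
    using \<phi> by (auto simp: NN_def)
  obtain B where B: "finite B" "card B + 1 \<le> prod_list (map Suc Ns)"
    "piecewise_affine_list B 1 (\<lambda>t. net_eval ps ([t, y] @ replicate (d - 2) 0))"
    using piecewise_affine_list_net_eval[OF ps(1) piecewise_affine_list_line[OF d]] by auto
  have "\<phi> x = net_eval ps x ! 0" if "length (net_eval ps x) = 1" for x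
  proof -
    have "net_eval ps x \<noteq> []" using that by auto
    then show ?thesis by (simp add: ps(2) hd_conv_nth)
  qed
  then have "piecewise_affine B (\<lambda>t. \<phi> ([t, y] @ replicate (d - 2) 0))"
    using B(3) by (simp add: piecewise_affine_list_def)
  moreover have "card B < K" using B(2) K by linarith
  ultimately show ?thesis
    by (rule piecewise_affine_misfits_alternating[where u = u and lbl = lbl, OF _ B(1) _ dec lbl])
qed

section \<open>One-neuron networks of any architecture\<close>

definition pass_layer :: "nat \<Rightarrow> nat \<Rightarrow> real list list \<times> real list" where
  "pass_layer a b = ((1 # replicate (a - 1) 0) # replicate (b - 1) (replicate a 0), replicate b 0)"

definition neuron_layer :: "nat \<Rightarrow> nat \<Rightarrow> real list \<Rightarrow> real \<Rightarrow> real list list \<times> real list" where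
  "neuron_layer d N w \<beta> = (w # replicate (N - 1) (replicate d 0), \<beta> # replicate (N - 1) 0)"

text \<open>The first layer computes the neuron in its first unit and zeros elsewhere; each later layer
  copies the first unit, on which the ReLU acts as the identity because the value is nonnegative.\<close>
definition neuron_net :: "nat \<Rightarrow> nat list \<Rightarrow> real list \<Rightarrow> real \<Rightarrow> (real list list \<times> real list) list"
  where "neuron_net d Ns w \<beta> = neuron_layer d (hd Ns) w \<beta> # map2 pass_layer Ns (tl Ns @ [1])"

lemma sum_list_map2_mult_replicate_zero: "sum_list (map2 (*) (replicate n 0) v) = (0::real)"
proof (induction n arbitrary: v)
  case (Suc n)
  then show ?case by (cases v) auto
qed simp

lemma affine_zero_rows:
  "map2 (\<lambda>row c. sum_list (map2 (*) row v) + c) (replicate n (replicate a 0)) (replicate n 0)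
     = replicate n (0::real)"
  by (induction n) (simp_all add: sum_list_map2_mult_replicate_zero)

lemma affine_pass_layer:
  assumes "1 \<le> b"
  shows "affine (pass_layer a b) (z # replicate (a - 1) 0) = z # replicate (b - 1) 0"
proof -
  have "replicate b (0::real) = 0 # replicate (b - 1) 0" using assms by (cases b) auto
  then show ?thesis
    by (simp add: affine_def pass_layer_def sum_list_map2_mult_replicate_zero affine_zero_rows
        sum_list_replicate)
qed

lemma net_eval_Cons: "ls \<noteq> [] \<Longrightarrow> net_eval (l # ls) v = net_eval ls (relu (affine l v))"
  by (cases ls) auto

lemma layers_ok_pass:
  "\<forall>n\<in>set (a # as). 0 < n \<Longrightarrow> layers_ok (a # as @ [1]) (map2 pass_layer (a # as) (as @ [1]))"
proof (induction as arbitrary: a)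
  case Nil
  then show ?case by (simp add: layers_ok_single pass_layer_def)
next
  case (Cons b bs)
  then show ?case by (simp add: layers_ok_Cons pass_layer_def)
qed

lemma net_eval_pass:
  assumes "\<forall>n\<in>set (a # as). 0 < n" "0 \<le> z"
  shows "hd (net_eval (map2 pass_layer (a # as) (as @ [1])) (z # replicate (a - 1) 0)) = z"
  using assms
proof (induction as arbitrary: a)
  case Nil
  then show ?case using affine_pass_layer[of 1 a z] by simp
next
  case (Cons b bs)
  have "relu (affine (pass_layer a b) (z # replicate (a - 1) 0)) = z # replicate (b - 1) 0"
    using Cons.prems affine_pass_layer[of b a z] by (simp add: relu_def)
  then show ?case using Cons by (simp add: net_eval_Cons)
qed

lemma NN_neuron:
  assumes Ns: "Ns \<noteq> []" "\<forall>n\<in>set Ns. 0 < n" and w: "length w = d"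
  shows "(\<lambda>x. max 0 (sum_list (map2 (*) w x) + \<beta>)) \<in> NN d Ns"
proof -
  obtain a as where a: "Ns = a # as" using Ns(1) by (cases Ns) auto
  have "layers_ok (d # Ns @ [1]) (neuron_net d Ns w \<beta>)"
    using layers_ok_pass[of a as] Ns(2) w
    by (simp add: a neuron_net_def neuron_layer_def layers_ok_Cons)
  moreover have "hd (net_eval (neuron_net d Ns w \<beta>) x) = max 0 (sum_list (map2 (*) w x) + \<beta>)" for x
  proof -
    have "relu (affine (neuron_layer d a w \<beta>) x)
        = max 0 (sum_list (map2 (*) w x) + \<beta>) # replicate (a - 1) 0"
      by (simp add: affine_def neuron_layer_def relu_def affine_zero_rows
          sum_list_map2_mult_replicate_zero)
    then have "net_eval (neuron_net d Ns w \<beta>) x = net_eval (map2 pass_layer (a # as) (as @ [1]))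
        (max 0 (sum_list (map2 (*) w x) + \<beta>) # replicate (a - 1) 0)"
      by (simp add: neuron_net_def a net_eval_Cons)
    then show ?thesis using net_eval_pass[of a as] Ns(2) by (simp add: a)
  qed
  ultimately show ?thesis unfolding NN_def by auto
qed

section \<open>Classification functions and training sets\<close>

lemma abs_nth_le_linf: "j < length v \<Longrightarrow> \<bar>v ! j\<bar> \<le> linf v"
  unfolding linf_def by (intro Max_ge) auto

lemma length_vsub: "length (vsub v w) = min (length v) (length w)"
  by (simp add: vsub_def)

lemma nth_vsub: "j < length v \<Longrightarrow> j < length w \<Longrightarrow> vsub v w ! j = v ! j - w ! j"
  by (simp add: vsub_def)

lemma abs_diff_nth_le_linf_vsub:
  "j < length v \<Longrightarrow> j < length w \<Longrightarrow> \<bar>v ! j - w ! j\<bar> \<le> linf (vsub v w)"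
  using abs_nth_le_linf[of j "vsub v w"] by (simp add: length_vsub nth_vsub)

definition cell_mid :: "nat \<Rightarrow> real" where
  "cell_mid m = (1 / real m + 1 / real (m + 1)) / 2"

definition parity_bit :: "nat \<Rightarrow> real" where
  "parity_bit m = (if even m then 1 else 0)"

definition parity_label :: "real \<Rightarrow> real" where
  "parity_label t = (if 0 < t then parity_bit (nat \<lfloor>1 / t\<rfloor>) else 0)"

text \<open>The value at the single point \<open>x ! 0 = a\<close> only serves to make \<open>a \<mapsto> class_fn a\<close> injective.\<close>
definition class_fn :: "real \<Rightarrow> real list \<Rightarrow> real" where
  "class_fn a x = (if x ! 0 = a then 1 else parity_label (x ! 0))"

text \<open>For \<open>y0 = y1\<close> the points lie on a line; for \<open>y0 < y1\<close> the points labelled 0 lie below those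
  labelled 1, and one neuron separates them.\<close>
definition train_point :: "nat \<Rightarrow> nat \<Rightarrow> real \<Rightarrow> real \<Rightarrow> nat \<Rightarrow> real list" where
  "train_point r d y0 y1 i =
     [cell_mid (r + i), if even (r + i) then y1 else y0] @ replicate (d - 2) 0"

definition train_set :: "nat \<Rightarrow> nat \<Rightarrow> real \<Rightarrow> real \<Rightarrow> real list list" where
  "train_set r d y0 y1 = map (train_point r d y0 y1) [0..<r]"

lemma cell_mid_strict_decreasing: "1 \<le> m \<Longrightarrow> m < m' \<Longrightarrow> cell_mid m' < cell_mid m"
proof -
  assume "1 \<le> m" "m < m'"
  then have "1 / real m' < 1 / real m" "1 / real (m' + 1) < 1 / real (m + 1)"
    by (auto intro!: divide_strict_left_mono)
  then show ?thesis by (simp add: cell_mid_def)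
qed

lemma cell_mid_bounds: "1 \<le> m \<Longrightarrow> 1 / real (m + 1) < cell_mid m \<and> cell_mid m < 1 / real m"
proof -
  assume "1 \<le> m"
  then have "1 / real (m + 1) < 1 / real m" by (auto intro!: divide_strict_left_mono)
  then show ?thesis by (simp add: cell_mid_def)
qed

lemma cell_mid_half_width:
  assumes "1 \<le> m"
  shows "cell_mid m - 1 / (2 * real m * (real m + 1)) = 1 / (real m + 1)"
    and "cell_mid m + 1 / (2 * real m * (real m + 1)) = 1 / real m"
proof -
  have "0 < real m" using assms by simp
  then show "cell_mid m - 1 / (2 * real m * (real m + 1)) = 1 / (real m + 1)"
    "cell_mid m + 1 / (2 * real m * (real m + 1)) = 1 / real m"
    by (simp_all add: cell_mid_def divide_simps) (simp_all add: algebra_simps)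
qed

lemma cell_mid_diff_Suc: "1 \<le> m \<Longrightarrow> cell_mid m - cell_mid (m + 1) = 1 / (real m * (real m + 2))"
proof -
  assume "1 \<le> m"
  then have "0 < real m" by simp
  then show ?thesis by (simp add: cell_mid_def divide_simps) (simp add: algebra_simps)
qed

lemma cell_mid_small: "3 \<le> m \<Longrightarrow> 0 < cell_mid m \<and> cell_mid m < 1/3"
proof -
  assume m: "3 \<le> m"
  have "1 / real m \<le> 1/3" using m by (simp add: field_simps)
  moreover have "0 < 1 / real (m + 1)" by simp
  ultimately show ?thesis using cell_mid_bounds[of m] m by linarith
qed

lemma parity_label_near_cell_mid:
  assumes m: "1 \<le> m" and z: "\<bar>z - cell_mid m\<bar> < 1 / (2 * real m * (real m + 1))"
  shows "parity_label z = parity_bit m"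
proof -
  have z_bounds: "1 / (real m + 1) < z" "z < 1 / real m"
    using z cell_mid_half_width[OF m] by (auto simp: abs_less_iff)
  moreover have "0 < 1 / (real m + 1)" by simp
  ultimately have "0 < z" by linarith
  then have "real m < 1 / z" "1 / z < real m + 1" using z_bounds m by (simp_all add: field_simps)
  then have "\<lfloor>1 / z\<rfloor> = int m" by (simp add: floor_eq_iff)
  then show ?thesis using \<open>0 < z\<close> by (simp add: parity_label_def)
qed

lemma eps'_le_half_width: "1 \<le> m \<Longrightarrow> m \<le> 2 * r \<Longrightarrow> eps' r \<le> 1 / (2 * real m * (real m + 1))"
proof -
  assume m: "1 \<le> m" "m \<le> 2 * r"
  then have "2 * real m * (real m + 1) \<le> 2 * (2 * real r) * (2 * real r + 1)"
    by (intro mult_mono) auto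
  also have "\<dots> \<le> (4 * real r + 3) * (4 * real r + 4)" by (simp add: algebra_simps)
  finally show ?thesis unfolding eps'_def using m by (intro divide_left_mono) auto
qed

lemma cell_mid_gap: "1 \<le> m \<Longrightarrow> m < m' \<Longrightarrow> m' \<le> 2 * r \<Longrightarrow> 2 * eps' r \<le> cell_mid m - cell_mid m'"
proof -
  assume m: "1 \<le> m" "m < m'" "m' \<le> 2 * r"
  have "cell_mid m' \<le> cell_mid (m + 1)"
    using cell_mid_strict_decreasing[of "m + 1" m'] m by (cases "m' = m + 1") auto
  moreover have "2 * eps' r \<le> 1 / (real m * (real m + 2))"
  proof -
    have "real m * (real m + 2) \<le> (2 * real r) * (2 * real r + 2)"
      using m by (intro mult_mono) auto
    also have "\<dots> \<le> (4 * real r + 3) * (4 * real r + 4) / 2" by (simp add: algebra_simps)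
    finally have "1 / ((4 * real r + 3) * (4 * real r + 4) / 2) \<le> 1 / (real m * (real m + 2))"
      using m by (intro divide_left_mono) auto
    then show ?thesis by (simp add: eps'_def)
  qed
  ultimately show ?thesis using cell_mid_diff_Suc[OF m(1)] by linarith
qed

lemma length_train_set [simp]: "length (train_set r d y0 y1) = r"
  by (simp add: train_set_def)

lemma nth_train_set [simp]: "i < r \<Longrightarrow> train_set r d y0 y1 ! i = train_point r d y0 y1 i"
  by (simp add: train_set_def)

lemma length_train_point: "2 \<le> d \<Longrightarrow> length (train_point r d y0 y1 i) = d"
  by (simp add: train_point_def)

lemma train_point_nth_0 [simp]: "train_point r d y0 y1 i ! 0 = cell_mid (r + i)"
  by (simp add: train_point_def)

lemma class_fn_train_point:
  assumes "3 \<le> r" "1/2 < a"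
  shows "class_fn a (train_point r d y0 y1 i) = parity_bit (r + i)"
proof -
  have "parity_label (cell_mid (r + i)) = parity_bit (r + i)"
    using assms by (intro parity_label_near_cell_mid) auto
  then show ?thesis using cell_mid_small[of "r + i"] assms by (simp add: class_fn_def)
qed

lemma train_point_in_cube:
  "2 \<le> d \<Longrightarrow> 3 \<le> r \<Longrightarrow> y0 \<in> {0..1} \<Longrightarrow> y1 \<in> {0..1} \<Longrightarrow> train_point r d y0 y1 i \<in> cube d"
  using cell_mid_small[of "r + i"] by (auto simp: cube_def train_point_def)

lemma train_point_shift: "0 \<le> s \<Longrightarrow> \<bar>train_point r d y y i ! l - train_point r d (y - s) y i ! l\<bar> \<le> s"
  by (cases l) (auto simp: train_point_def nth_Cons' nth_append)

lemma classification_fn_class_fn: "classification_fn d (class_fn a)"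
  by (auto simp: classification_fn_def class_fn_def parity_label_def parity_bit_def)

lemma inj_on_restrict_class_fn:
  assumes "1 \<le> d"
  shows "inj_on (\<lambda>a. restrict (class_fn a) (cube d)) {1/2<..<1}"
proof (rule inj_onI)
  fix a b :: real assume a: "a \<in> {1/2<..<1}" and b: "b \<in> {1/2<..<1}"
    and eq: "restrict (class_fn a) (cube d) = restrict (class_fn b) (cube d)"
  define x where "x = a # replicate (d - 1) 0"
  have "x \<in> cube d" using a assms by (auto simp: x_def cube_def)
  then have "class_fn a x = class_fn b x" using eq by (metis restrict_apply')
  moreover have "parity_label a = 0"
  proof -
    have "1 < 1/a" "1/a < 2" using a by (auto simp: field_simps)
    then have "\<lfloor>1/a\<rfloor> = 1" by (simp add: floor_eq_iff)
    then show ?thesis using a by (simp add: parity_label_def parity_bit_def)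
  qed
  ultimately show "a = b" by (auto simp: class_fn_def x_def split: if_splits)
qed

lemma uncountable_restrict_class_fns:
  assumes "1 \<le> d"
  shows "uncountable ((\<lambda>f. restrict f (cube d)) ` class_fn ` {1/2<..<1})"
proof -
  have "uncountable {1/2<..<(1::real)}" by (simp add: uncountable_open_interval)
  then have "uncountable ((\<lambda>a. restrict (class_fn a) (cube d)) ` {1/2<..<1})"
    using countable_image_inj_on inj_on_restrict_class_fn[OF assms] by blast
  then show ?thesis by (simp add: image_image)
qed

lemma train_set_separated:
  assumes d: "2 \<le> d" and r: "3 \<le> r" and i: "i < r" "j < r" "i \<noteq> j"
  shows "2 * eps' r \<le> linf (vsub (train_point r d y0 y1 i) (train_point r d y0 y1 j))"
proof -
  have "2 * eps' r \<le> \<bar>cell_mid (r + i) - cell_mid (r + j)\<bar>"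
    using cell_mid_gap[of "r + i" "r + j" r] cell_mid_gap[of "r + j" "r + i" r] r i
    by (cases "i < j") auto
  also have "\<dots> \<le> linf (vsub (train_point r d y0 y1 i) (train_point r d y0 y1 j))"
    using abs_diff_nth_le_linf_vsub[of 0 "train_point r d y0 y1 i" "train_point r d y0 y1 j"] d
    by (simp add: length_train_point)
  finally show ?thesis .
qed

lemma class_fn_locally_constant:
  assumes d: "2 \<le> d" and r: "3 \<le> r" and a: "1/2 < a" and i: "i < r"
    and z: "z \<in> cube d" "linf (vsub z (train_point r d y0 y1 i)) < eps' r"
  shows "class_fn a z = parity_bit (r + i)"
proof -
  have "z \<noteq> []" "length z = d" using z d by (auto simp: cube_def)
  then have close: "\<bar>z ! 0 - cell_mid (r + i)\<bar> < eps' r"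
    using abs_diff_nth_le_linf_vsub[of 0 z "train_point r d y0 y1 i"] z d
    by (simp add: length_train_point)
  also have "eps' r \<le> 1 / (2 * real (r + i) * (real (r + i) + 1))"
    using i r by (intro eps'_le_half_width) auto
  finally have near: "\<bar>z ! 0 - cell_mid (r + i)\<bar> < 1 / (2 * real (r + i) * (real (r + i) + 1))" .
  then have "parity_label (z ! 0) = parity_bit (r + i)"
    using r by (intro parity_label_near_cell_mid) auto
  moreover have "z ! 0 < 1/2"
  proof -
    have "(3::real) * 4 \<le> (4 * real r + 3) * (4 * real r + 4)" by (intro mult_mono) auto
    then have "eps' r \<le> 1 / (3 * 4)" unfolding eps'_def by (intro divide_left_mono) auto
    then show ?thesis using close cell_mid_small[of "r + i"] r by (simp add: abs_less_iff)
  qed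
  ultimately show ?thesis using a by (simp add: class_fn_def)
qed

lemma train_set_in_S:
  assumes d: "2 \<le> d" and r: "3 \<le> r" and y: "y0 \<in> {0..1}" "y1 \<in> {0..1}" and a: "1/2 < a"
  shows "train_set r d y0 y1 \<in> S (class_fn a) d (eps' r)"
proof -
  have "inj_on (train_point r d y0 y1) {0..<r}"
  proof (rule inj_onI)
    fix i j assume "train_point r d y0 y1 i = train_point r d y0 y1 j"
    then have "cell_mid (r + i) = cell_mid (r + j)" by (metis train_point_nth_0)
    then show "i = j" using cell_mid_strict_decreasing[of "r+i" "r+j"]
        cell_mid_strict_decreasing[of "r+j" "r+i"] r
      by (cases i j rule: linorder_cases) auto
  qed
  then show ?thesis
    using train_point_in_cube[OF d r y] train_set_separated[OF d r]
      class_fn_locally_constant[OF d r a] class_fn_train_point[OF r a]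
    by (fastforce simp: S_def train_set_def distinct_map)
qed

lemma NN_misfits_train_set_on_line:
  assumes d: "2 \<le> d" and \<phi>: "\<phi> \<in> NN d Ns" and r: "3 * prod_list (map Suc Ns) \<le> r"
  shows "\<exists>j<r. 1/2 \<le> \<bar>\<phi> (train_set r d y y ! j) - parity_bit (r + j)\<bar>"
proof -
  have P: "1 \<le> prod_list (map Suc Ns)" by (induction Ns) auto
  define K where "K = (r - 1) div 2"
  have K: "prod_list (map Suc Ns) \<le> K" and "3 \<le> r" using r P unfolding K_def by linarith+
  have dec: "cell_mid (r + j) < cell_mid (r + i)" if "i < j" for i j
    using cell_mid_strict_decreasing \<open>3 \<le> r\<close> that by simp
  have lbl: "parity_bit (r + i) \<in> {0, 1}" "parity_bit (r + Suc i) = 1 - parity_bit (r + i)" for i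
    by (simp_all add: parity_bit_def)
  obtain j where "j \<le> 2 * K"
      "1/2 \<le> \<bar>\<phi> ([cell_mid (r + j), y] @ replicate (d - 2) 0) - parity_bit (r + j)\<bar>"
    using NN_misfits_alternating_on_line[where u = "\<lambda>j. cell_mid (r + j)" and
        lbl = "\<lambda>j. parity_bit (r + j)", OF d \<phi> K dec lbl] by blast
  moreover have "j < r" using \<open>j \<le> 2 * K\<close> \<open>3 \<le> r\<close> unfolding K_def by linarith
  ultimately show ?thesis by (auto simp: train_point_def)
qed

lemma NN_interpolates_split_train_set:
  assumes d: "2 \<le> d" and r: "3 \<le> r" and a: "1/2 < a" and s: "0 < s"
    and Ns: "Ns \<noteq> []" "\<forall>n\<in>set Ns. 0 < n"
  shows "\<exists>\<phi>\<in>NN d Ns. map \<phi> (train_set r d (y - s) y) = map (class_fn a) (train_set r d (y - s) y)"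
proof -
  define w where "w = 0 # (1 / s) # replicate (d - 2) 0"
  let ?\<phi> = "\<lambda>x. max 0 (sum_list (map2 (*) w x) + (s - y) / s)"
  have "?\<phi> \<in> NN d Ns" using d by (intro NN_neuron[OF Ns]) (simp add: w_def)
  moreover have "?\<phi> (train_point r d (y - s) y i) = parity_bit (r + i)" for i
  proof -
    have "sum_list (map2 (*) w (train_point r d (y - s) y i))
        = (if even (r + i) then y else y - s) / s"
      by (simp add: w_def train_point_def sum_list_map2_mult_replicate_zero sum_list_replicate)
    then show ?thesis using s by (simp add: parity_bit_def add_divide_distrib[symmetric])
  qed
  then have "map ?\<phi> (train_set r d (y - s) y) = map (class_fn a) (train_set r d (y - s) y)"
    using class_fn_train_point[OF r a] by (simp add: train_set_def)
  ultimately show ?thesis by blast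
qed

section \<open>Oracles, norms and near minimisers\<close>

definition dyadic_round :: "nat \<Rightarrow> real \<Rightarrow> real" where
  "dyadic_round k x = of_int \<lfloor>x * 2^k + 1/2\<rfloor> / 2^k"

lemma dyadic_round_error: "\<bar>dyadic_round k x - x\<bar> \<le> (1/2)^(k+1)"
proof -
  define n where "n = \<lfloor>x * 2^k + 1/2\<rfloor>"
  have "\<bar>of_int n - x * 2^k\<bar> \<le> 1/2" unfolding n_def by linarith
  have "dyadic_round k x - x = (of_int n - x * 2^k) / 2^k"
    by (simp add: dyadic_round_def n_def field_simps)
  then have "\<bar>dyadic_round k x - x\<bar> = \<bar>of_int n - x * 2^k\<bar> / 2^k" by simp
  also have "\<dots> \<le> (1/2) / 2^k" using \<open>\<bar>of_int n - x * 2^k\<bar> \<le> 1/2\<close> by (intro divide_right_mono) auto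
  also have "\<dots> = (1/2)^(k+1)" by (simp add: power_divide)
  finally show ?thesis .
qed

definition rounding_oracle :: "real list list \<Rightarrow> nat \<Rightarrow> nat \<Rightarrow> real list" where
  "rounding_oracle T k i = (if i < length T then map (dyadic_round k) (T ! i) else [])"

text \<open>An oracle for \<open>T\<close> that an algorithm reading only precision up to \<open>K\<close> cannot tell apart from
  the rounding oracle of \<open>T0\<close>.\<close>
definition spliced_oracle :: "nat \<Rightarrow> real list list \<Rightarrow> real list list \<Rightarrow> nat \<Rightarrow> nat \<Rightarrow> real list" where
  "spliced_oracle K T0 T k i = (if k \<le> K then rounding_oracle T0 k i else rounding_oracle T k i)"

lemma admissible_spliced_oracle:
  assumes len: "length T0 = length T" and cube: "set T0 \<subseteq> cube d" "set T \<subseteq> cube d"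
    and close: "\<And>i l. i < length T \<Longrightarrow> l < d \<Longrightarrow> \<bar>T0 ! i ! l - T ! i ! l\<bar> \<le> (1/2)^(K+1)"
  shows "admissible_oracle d T (spliced_oracle K T0 T)"
proof -
  have dims: "length (T0 ! i) = d" "length (T ! i) = d" if "i < length T" for i
  proof -
    have "T0 ! i \<in> set T0" "T ! i \<in> set T" using that len by auto
    then show "length (T0 ! i) = d" "length (T ! i) = d" using cube by (auto simp: cube_def)
  qed
  have err: "\<bar>spliced_oracle K T0 T k i ! l - T ! i ! l\<bar> \<le> (1/2)^k"
    if i: "i < length T" and l: "l < d" for k i l
  proof (cases "k \<le> K")
    case True
    have "(1/2::real)^(K+1) \<le> (1/2)^(k+1)" using True by (intro power_decreasing) auto
    then have "\<bar>T0 ! i ! l - T ! i ! l\<bar> \<le> (1/2)^(k+1)" using close[OF i l] by linarith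
    moreover have "\<bar>dyadic_round k (T0 ! i ! l) - T0 ! i ! l\<bar> \<le> (1/2)^(k+1)"
      by (rule dyadic_round_error)
    moreover have "(1/2::real)^(k+1) + (1/2)^(k+1) = (1/2)^k" by simp
    ultimately have "\<bar>dyadic_round k (T0 ! i ! l) - T ! i ! l\<bar> \<le> (1/2)^k" by arith
    then show ?thesis using True i l dims[OF i] len
      by (simp add: spliced_oracle_def rounding_oracle_def)
  next
    case False
    have "\<bar>dyadic_round k (T ! i ! l) - T ! i ! l\<bar> \<le> (1/2)^(k+1)" by (rule dyadic_round_error)
    also have "\<dots> \<le> (1/2)^k" by (simp add: power_decreasing)
    finally show ?thesis
      using False i l dims[OF i] by (simp add: spliced_oracle_def rounding_oracle_def)
  qed
  show ?thesis
    unfolding admissible_oracle_def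
    using err dims len by (auto simp: spliced_oracle_def rounding_oracle_def dyadic_round_def)
qed

lemma admissible_rounding_oracle:
  assumes "set T \<subseteq> cube d"
  shows "admissible_oracle d T (rounding_oracle T)"
proof -
  have "spliced_oracle 0 T T = rounding_oracle T" by (intro ext) (simp add: spliced_oracle_def)
  then show ?thesis using admissible_spliced_oracle[of T T d 0] assms by simp
qed

lemma linf_le_norms: "nrm \<in> {lone, ltwo, linf} \<Longrightarrow> linf v \<le> nrm v"
proof -
  assume nrm: "nrm \<in> {lone, ltwo, linf}"
  have "\<bar>x\<bar> \<le> nrm v" if "x \<in> set v" for x
  proof -
    have "\<bar>x\<bar> \<le> lone v" unfolding lone_def using that by (intro member_le_sum_list) auto
    moreover have "x\<^sup>2 \<le> sum_list (map (\<lambda>t. t\<^sup>2) v)" using that by (intro member_le_sum_list) auto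
    then have "\<bar>x\<bar> \<le> ltwo v" unfolding ltwo_def using real_sqrt_le_mono by fastforce
    moreover have "\<bar>x\<bar> \<le> linf v" unfolding linf_def using that by (intro Max_ge) auto
    ultimately show ?thesis using nrm by auto
  qed
  moreover have "0 \<le> lone v" "0 \<le> ltwo v" "0 \<le> linf v"
    unfolding lone_def ltwo_def linf_def by (auto intro!: sum_list_nonneg Max_ge)
  then have "0 \<le> nrm v" using nrm by auto
  ultimately show ?thesis unfolding linf_def by (intro Max.boundedI) auto
qed

lemma linf_map_upt: "linf (map h [0..<r]) = (MAX i\<in>{..r}. if i < r then \<bar>h i\<bar> else 0)"
proof -
  have "insert 0 (abs ` set (map h [0..<r])) = (\<lambda>i. if i < r then \<bar>h i\<bar> else 0) ` {..r}"
    by (force simp: image_iff)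
  then show ?thesis unfolding linf_def by simp
qed

lemma measurable_norm_vsub_ge:
  assumes len: "\<And>\<omega>. \<omega> \<in> space M \<Longrightarrow> length (g \<omega>) = r"
    and meas: "\<And>i. i < r \<Longrightarrow> (\<lambda>\<omega>. g \<omega> ! i) \<in> borel_measurable M"
    and v: "length v = r" and nrm: "nrm \<in> {lone, ltwo, linf}"
  shows "{\<omega>\<in>space M. \<tau> \<le> nrm (vsub (g \<omega>) v)} \<in> sets M"
proof -
  define h where "h \<omega> i = g \<omega> ! i - v ! i" for \<omega> i
  have vsub_eq: "vsub (g \<omega>) v = map (h \<omega>) [0..<r]" if "\<omega> \<in> space M" for \<omega>
    using len[OF that] v by (intro nth_equalityI) (auto simp: vsub_def h_def)
  have h_meas: "(\<lambda>\<omega>. h \<omega> i) \<in> borel_measurable M" if "i < r" for i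
    using meas[OF that] by (simp add: h_def)
  have "(\<lambda>\<omega>. nrm (map (h \<omega>) [0..<r])) \<in> borel_measurable M"
  proof -
    have "(\<lambda>\<omega>. \<Sum>i<r. \<bar>h \<omega> i\<bar>) \<in> borel_measurable M"
      "(\<lambda>\<omega>. sqrt (\<Sum>i<r. (h \<omega> i)\<^sup>2)) \<in> borel_measurable M"
      using h_meas by (auto intro!: borel_measurable_sum)
    moreover have "(\<lambda>\<omega>. MAX i\<in>{..r}. if i < r then \<bar>h \<omega> i\<bar> else 0) \<in> borel_measurable M"
    proof (rule borel_measurable_Max)
      fix i show "(\<lambda>\<omega>. if i < r then \<bar>h \<omega> i\<bar> else 0) \<in> borel_measurable M"
        using h_meas[of i] by (cases "i < r") auto
    qed simp
    moreover have "lone (map f [0..<r]) = (\<Sum>i<r. \<bar>f i\<bar>)"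
      "ltwo (map f [0..<r]) = sqrt (\<Sum>i<r. (f i)\<^sup>2)" for f :: "nat \<Rightarrow> real"
      by (simp_all add: lone_def ltwo_def o_def sum_list_sum_nth atLeast0LessThan)
    ultimately show ?thesis using nrm by (auto simp: linf_map_upt)
  qed
  then have "{\<omega>\<in>space M. \<tau> \<le> nrm (map (h \<omega>) [0..<r])} \<in> sets M" by measurable
  moreover have "{\<omega>\<in>space M. \<tau> \<le> nrm (vsub (g \<omega>) v)} = {\<omega>\<in>space M. \<tau> \<le> nrm (map (h \<omega>) [0..<r])}"
    using vsub_eq by auto
  ultimately show ?thesis by simp
qed

text \<open>The sets \<open>G K\<close> need not be measurable, so the conclusion bounds their inner measure.\<close>
lemma (in prob_space) inner_measure_incseq_cover:
  assumes q: "q < 1" and mono: "\<And>K. G K \<subseteq> G (Suc K)" and cover: "space M \<subseteq> (\<Union>K. G K)"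
  shows "\<exists>K. \<forall>B\<in>sets M. G K \<subseteq> B \<longrightarrow> q < measure M B"
proof (rule ccontr)
  assume "\<not> ?thesis"
  then have "\<forall>K. \<exists>B. B \<in> sets M \<and> G K \<subseteq> B \<and> measure M B \<le> q" by (auto simp: not_less)
  then obtain B where B: "\<And>K. B K \<in> sets M" "\<And>K. G K \<subseteq> B K" "\<And>K. measure M (B K) \<le> q"
    by metis
  define H where "H K = space M \<inter> (\<Inter>j\<in>{K..}. B j)" for K
  have H_sets: "H K \<in> sets M" for K unfolding H_def using B(1) by auto
  have H_small: "measure M (H K) \<le> q" for K
  proof -
    have "H K \<subseteq> B K" unfolding H_def by auto
    then have "measure M (H K) \<le> measure M (B K)" using B(1) by (rule finite_measure_mono)
    then show ?thesis using B(3)[of K] by linarith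
  qed
  have "(\<Union>K. H K) = space M"
  proof (intro antisym subsetI)
    fix \<omega> assume "\<omega> \<in> space M"
    then obtain K where "\<omega> \<in> G K" using cover by auto
    then have "\<omega> \<in> B j" if "K \<le> j" for j using B(2) lift_Suc_mono_le[of G, OF mono that] by blast
    then show "\<omega> \<in> (\<Union>K. H K)" using \<open>\<omega> \<in> space M\<close> by (auto simp: H_def)
  qed (auto simp: H_def)
  moreover have "(\<lambda>K. measure M (H K)) \<longlonglongrightarrow> measure M (\<Union>K. H K)"
    using H_sets by (intro finite_Lim_measure_incseq) (auto simp: incseq_def H_def)
  ultimately have "1 \<le> q" using H_small prob_space by (intro LIMSEQ_le_const2) auto
  then show False using q by simp
qed

lemma (in prob_space) measure_gt_of_likely_cover:
  assumes likely: "\<forall>B\<in>sets M. G \<subseteq> B \<longrightarrow> 2 * p < measure M B" and cover: "G \<subseteq> F \<union> E"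
    and sets: "F \<in> sets M" "E \<in> sets M" and small: "measure M E \<le> p"
  shows "p < measure M F"
proof -
  have "2 * p < measure M (F \<union> E)" using likely cover sets by blast
  moreover have "measure M (F \<union> E) \<le> measure M F + measure M E" using sets by (rule measure_Un_le)
  ultimately show ?thesis using small by linarith
qed

lemma argmin_eps_nonempty:
  assumes "X \<noteq> {}" "0 < \<epsilon>"
  shows "argmin_eps \<epsilon> X g \<noteq> {}"
proof (cases "(INF x\<in>X. g x) = \<top>")
  case True
  then have "\<forall>y\<in>X. g y = \<top>" by (metis INF_lower top.extremum_uniqueI)
  then show ?thesis using assms by (auto simp: argmin_eps_def)
next
  case False
  then have "(INF x\<in>X. g x) < (INF x\<in>X. g x) + ennreal \<epsilon>"
    using assms(2) by (simp add: ennreal_add_left_cancel_less top.not_eq_extremum)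
  then obtain x where x: "x \<in> X" "g x < (INF x\<in>X. g x) + ennreal \<epsilon>" by (auto simp: INF_less_iff)
  have "g x \<le> g y + ennreal \<epsilon>" if "y \<in> X" for y
  proof -
    have "(INF x\<in>X. g x) + ennreal \<epsilon> \<le> g y + ennreal \<epsilon>"
      using that by (intro add_right_mono INF_lower)
    with x(2) have "g x < g y + ennreal \<epsilon>" by (rule less_le_trans)
    then show ?thesis by (rule less_imp_le)
  qed
  then show ?thesis using x(1) unfolding argmin_eps_def by blast
qed

lemma argmin_eps_CF_eps_close:
  assumes R: "R \<in> CF_eps r \<epsilon> \<epsilon>h" and fit: "\<psi> \<in> X" "map \<psi> T = ys" and len: "length T = r"
    and \<phi>: "\<phi> \<in> argmin_eps \<epsilon> X (\<lambda>\<phi>. R (map \<phi> T) ys)"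
  shows "linf (vsub (map \<phi> T) ys) \<le> \<epsilon>h"
proof -
  have "R (map \<psi> T) ys = 0" using R fit len by (auto simp: CF_eps_def CF_def)
  then have "R (map \<phi> T) ys \<le> ennreal \<epsilon>" using \<phi> fit(1) by (force simp: argmin_eps_def)
  then show ?thesis using R fit len by (auto simp: CF_eps_def)
qed

text \<open>Where the threshold \<open>1/4 - 3\<epsilon>h/4\<close> comes from: an output within it of a value that misses the
  label \<open>L\<close> by \<open>1/2\<close> stays that far from any value \<open>\<epsilon>h\<close>-close to \<open>L\<close>.\<close>
lemma output_far_from_fit:
  fixes g u w L \<epsilon>h :: real
  assumes "1/2 \<le> \<bar>u - L\<bar>" "\<bar>w - L\<bar> \<le> \<epsilon>h" "\<bar>g - u\<bar> < 1/4 - 3*\<epsilon>h/4" "0 \<le> \<epsilon>h"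
  shows "1/4 - 3*\<epsilon>h/4 \<le> \<bar>g - w\<bar>"
  using assms by arith

locale hard_learning_problem =
  fixes d :: nat and Ns :: "nat list" and r :: nat and \<epsilon> \<epsilon>h :: real
    and R :: "real list \<Rightarrow> real list \<Rightarrow> ennreal" and M :: "(nat \<Rightarrow> bool) measure"
    and \<Gamma> :: "(nat \<Rightarrow> bool) \<Rightarrow> (nat \<Rightarrow> nat \<Rightarrow> real list) \<Rightarrow> real list" and p a :: real
  assumes dim: "2 \<le> d" and arch: "Ns \<noteq> []" "\<forall>n\<in>set Ns. 0 < n"
    and enough_points: "3 * prod_list (map Suc Ns) \<le> r"
    and eps: "0 < \<epsilon>" "0 < \<epsilon>h" and cost: "R \<in> CF_eps r \<epsilon> \<epsilon>h"
    and alg: "randomised_algorithm M d r \<Gamma>" and p: "p < 1/2" and a: "1/2 < a"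
begin

sublocale prob_space M
  using alg by (simp add: randomised_algorithm_def)

definition near_minimisers :: "real list list \<Rightarrow> (real list \<Rightarrow> real) set" where
  "near_minimisers T = argmin_eps \<epsilon> (NN d Ns) (\<lambda>\<phi>. R (map \<phi> T) (map (class_fn a) T))"

definition fails_on :: "real list list \<Rightarrow> (nat \<Rightarrow> nat \<Rightarrow> real list) \<Rightarrow> bool" where
  "fails_on T Or \<longleftrightarrow> (\<forall>\<phi>\<in>near_minimisers T. \<forall>nrm\<in>{lone, ltwo, linf}.
     measure M {\<omega>\<in>space M. nrm (vsub (\<Gamma> \<omega> Or) (map \<phi> T)) \<ge> 1/4 - 3*\<epsilon>h/4} > p)"

definition insensitive_beyond :: "nat \<Rightarrow> (nat \<Rightarrow> nat \<Rightarrow> real list) \<Rightarrow> (nat \<Rightarrow> bool) set" where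
  "insensitive_beyond K Or = {\<omega>\<in>space M. \<forall>T' Or'. length T' = r \<and> set T' \<subseteq> cube d \<and>
     admissible_oracle d T' Or' \<and> (\<forall>k\<le>K. \<forall>i. Or' k i = Or k i) \<longrightarrow> \<Gamma> \<omega> Or' = \<Gamma> \<omega> Or}"

abbreviation line_set :: "real \<Rightarrow> real list list" where
  "line_set y \<equiv> train_set r d y y"

abbreviation split_set :: "real \<Rightarrow> real \<Rightarrow> real list list" where
  "split_set y s \<equiv> train_set r d (y - s) y"

lemma three_le_r: "3 \<le> r"
proof -
  have "1 \<le> prod_list (map Suc Ns)" by (induction Ns) auto
  then show ?thesis using enough_points by linarith
qed

lemma near_minimisers_nonempty: "near_minimisers T \<noteq> {}"
  unfolding near_minimisers_def
  using NN_neuron[OF arch, of "replicate d 0" d 0] eps(1) by (intro argmin_eps_nonempty) auto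

lemma train_set_valid:
  assumes "y0 \<in> {0..1}" "y1 \<in> {0..1}"
  shows "train_set r d y0 y1 \<in> S (class_fn a) d (eps' r)" and "set (train_set r d y0 y1) \<subseteq> cube d"
  using train_set_in_S[OF dim three_le_r assms a] by (simp_all add: S_def)

lemma algorithm_output:
  assumes "length T = r" "set T \<subseteq> cube d" "admissible_oracle d T Or"
  shows "\<And>\<omega>. \<omega> \<in> space M \<Longrightarrow> length (\<Gamma> \<omega> Or) = r"
    and "\<And>i. i < r \<Longrightarrow> (\<lambda>\<omega>. \<Gamma> \<omega> Or ! i) \<in> borel_measurable M"
    and "space M \<subseteq> (\<Union>K. insensitive_beyond K Or)"
proof -
  have spec: "(\<forall>\<omega>\<in>space M. length (\<Gamma> \<omega> Or) = r) \<and> (\<forall>i<r. (\<lambda>\<omega>. \<Gamma> \<omega> Or ! i) \<in> borel_measurable M) \<and>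
      (\<forall>\<omega>\<in>space M. \<exists>\<Lambda>::(nat \<times> nat) set. finite \<Lambda> \<and>
         (\<forall>T' Or'. length T' = r \<and> set T' \<subseteq> cube d \<and> admissible_oracle d T' Or'
            \<and> (\<forall>(k,i)\<in>\<Lambda>. Or' k i = Or k i) \<longrightarrow> \<Gamma> \<omega> Or' = \<Gamma> \<omega> Or))"
    using alg assms unfolding randomised_algorithm_def by blast
  then show "\<And>\<omega>. \<omega> \<in> space M \<Longrightarrow> length (\<Gamma> \<omega> Or) = r"
    and "\<And>i. i < r \<Longrightarrow> (\<lambda>\<omega>. \<Gamma> \<omega> Or ! i) \<in> borel_measurable M" by blast+
  show "space M \<subseteq> (\<Union>K. insensitive_beyond K Or)"
  proof
    fix \<omega> assume \<omega>: "\<omega> \<in> space M"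
    then obtain \<Lambda> :: "(nat \<times> nat) set" where \<Lambda>: "finite \<Lambda>"
      "\<forall>T' Or'. length T' = r \<and> set T' \<subseteq> cube d \<and> admissible_oracle d T' Or'
         \<and> (\<forall>(k,i)\<in>\<Lambda>. Or' k i = Or k i) \<longrightarrow> \<Gamma> \<omega> Or' = \<Gamma> \<omega> Or"
      using spec by blast
    define K where "K = Max (insert 0 (fst ` \<Lambda>))"
    have "k \<le> K" if "(k, i) \<in> \<Lambda>" for k i
      using that \<Lambda>(1) unfolding K_def by (intro Max_ge) force+
    then have "\<forall>(k,i)\<in>\<Lambda>. Or' k i = Or k i" if "\<forall>k\<le>K. \<forall>i. Or' k i = Or k i" for Or'
      using that by auto
    then have "\<omega> \<in> insensitive_beyond K Or"
      using \<omega> \<Lambda>(2) unfolding insensitive_beyond_def by blast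
    then show "\<omega> \<in> (\<Union>K. insensitive_beyond K Or)" by blast
  qed
qed

lemma far_event_measurable:
  assumes "length T = r" "set T \<subseteq> cube d" "admissible_oracle d T Or"
    and "length v = r" "nrm \<in> {lone, ltwo, linf}"
  shows "{\<omega>\<in>space M. nrm (vsub (\<Gamma> \<omega> Or) v) \<ge> \<tau>} \<in> sets M"
  using measurable_norm_vsub_ge[OF algorithm_output(1,2)[OF assms(1-3)] assms(4,5)] by simp

lemma insensitive_beyond_likely:
  assumes "length T = r" "set T \<subseteq> cube d" "admissible_oracle d T Or"
  shows "\<exists>K. \<forall>B\<in>sets M. insensitive_beyond K Or \<subseteq> B \<longrightarrow> 2 * p < measure M B"
proof (rule inner_measure_incseq_cover)
  show "2 * p < 1" using p by simp
  show "insensitive_beyond K Or \<subseteq> insensitive_beyond (Suc K) Or" for K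
    by (auto simp: insensitive_beyond_def)
  show "space M \<subseteq> (\<Union>K. insensitive_beyond K Or)" by (rule algorithm_output(3)[OF assms])
qed

lemma admissible_spliced_split_set:
  assumes y: "y \<in> {1/4<..<3/4}" and s: "0 < s" "s < 1/8" "s \<le> (1/2)^(K+1)"
  shows "admissible_oracle d (split_set y s) (spliced_oracle K (line_set y) (split_set y s))"
proof (rule admissible_spliced_oracle)
  show "set (line_set y) \<subseteq> cube d" "set (split_set y s) \<subseteq> cube d"
    using y s train_set_valid(2) by auto
  show "\<bar>line_set y ! i ! l - split_set y s ! i ! l\<bar> \<le> (1/2)^(K+1)"
    if "i < length (split_set y s)" "l < d" for i l
    using train_point_shift[of s r d y i l] s(1,3) that by simp
qed simp

lemma near_minimiser_fits_split_set:
  assumes y: "y \<in> {1/4<..<3/4}" and s: "0 < s" "s < 1/8" and j: "j < r"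
    and \<phi>: "\<phi> \<in> near_minimisers (split_set y s)"
  shows "\<bar>\<phi> (split_set y s ! j) - parity_bit (r + j)\<bar> \<le> \<epsilon>h"
proof -
  obtain \<psi> where "\<psi> \<in> NN d Ns" "map \<psi> (split_set y s) = map (class_fn a) (split_set y s)"
    using NN_interpolates_split_train_set[OF dim three_le_r a s(1) arch] by blast
  then have "linf (vsub (map \<phi> (split_set y s)) (map (class_fn a) (split_set y s))) \<le> \<epsilon>h"
    using \<phi> by (intro argmin_eps_CF_eps_close[OF cost]) (auto simp: near_minimisers_def)
  then show ?thesis
    using abs_diff_nth_le_linf_vsub[of j "map \<phi> (split_set y s)" "map (class_fn a) (split_set y s)"] j
      class_fn_train_point[OF three_le_r a] by simp
qed

lemma output_far_from_near_minimiser: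
  assumes y: "y \<in> {1/4<..<3/4}" and s: "0 < s" "s < 1/8" "s \<le> (1/2)^(K+1)"
    and misfit: "j < r" "1/2 \<le> \<bar>\<psi> (line_set y ! j) - parity_bit (r + j)\<bar>"
    and \<phi>: "\<phi> \<in> near_minimisers (split_set y s)"
    and nrm0: "nrm0 \<in> {lone, ltwo, linf}" and nrm: "nrm \<in> {lone, ltwo, linf}"
    and \<omega>: "\<omega> \<in> insensitive_beyond K (rounding_oracle (line_set y))"
    and close: "nrm0 (vsub (\<Gamma> \<omega> (rounding_oracle (line_set y))) (map \<psi> (line_set y))) < 1/4 - 3*\<epsilon>h/4"
  shows "1/4 - 3*\<epsilon>h/4 \<le>
    nrm (vsub (\<Gamma> \<omega> (spliced_oracle K (line_set y) (split_set y s))) (map \<phi> (split_set y s)))"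
proof -
  define Or0 where "Or0 = rounding_oracle (line_set y)"
  define Or where "Or = spliced_oracle K (line_set y) (split_set y s)"
  have cube0: "set (line_set y) \<subseteq> cube d" and cube: "set (split_set y s) \<subseteq> cube d"
    using y s train_set_valid(2) by auto
  have "\<forall>k\<le>K. \<forall>i. Or k i = Or0 k i" by (simp add: Or_def Or0_def spliced_oracle_def)
  then have "\<omega> \<in> space M" and same_output: "\<Gamma> \<omega> Or = \<Gamma> \<omega> Or0"
    using \<omega> admissible_spliced_split_set[OF y s] cube length_train_set
    unfolding insensitive_beyond_def Or_def Or0_def by blast+
  have len: "length (\<Gamma> \<omega> Or0) = r"
    using algorithm_output(1)[OF _ cube0 admissible_rounding_oracle[OF cube0]] \<open>\<omega> \<in> space M\<close>
    by (simp add: Or0_def)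
  have "linf (vsub (\<Gamma> \<omega> Or0) (map \<psi> (line_set y))) < 1/4 - 3*\<epsilon>h/4"
    using close linf_le_norms[OF nrm0, of "vsub (\<Gamma> \<omega> Or0) (map \<psi> (line_set y))"]
    unfolding Or0_def by linarith
  then have "\<bar>\<Gamma> \<omega> Or0 ! j - \<psi> (line_set y ! j)\<bar> < 1/4 - 3*\<epsilon>h/4"
    using abs_diff_nth_le_linf_vsub[of j "\<Gamma> \<omega> Or0" "map \<psi> (line_set y)"] len misfit(1) by simp
  then have "1/4 - 3*\<epsilon>h/4 \<le> \<bar>\<Gamma> \<omega> Or0 ! j - \<phi> (split_set y s ! j)\<bar>"
    using output_far_from_fit[OF misfit(2) near_minimiser_fits_split_set[OF y s(1,2) misfit(1) \<phi>]]
      eps(2) by simp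
  also have "\<dots> \<le> linf (vsub (\<Gamma> \<omega> Or) (map \<phi> (split_set y s)))"
    using abs_diff_nth_le_linf_vsub[of j "\<Gamma> \<omega> Or" "map \<phi> (split_set y s)"] len misfit(1) same_output
    by simp
  also have "\<dots> \<le> nrm (vsub (\<Gamma> \<omega> Or) (map \<phi> (split_set y s)))" by (rule linf_le_norms[OF nrm])
  finally show ?thesis by (simp add: Or_def)
qed

text \<open>On the seeds that only look at precision up to \<open>K\<close>, the algorithm cannot tell \<open>split_set y s\<close>
  from \<open>line_set y\<close>, where its output is close to a network misfitting \<open>line_set y\<close>.\<close>
lemma split_set_fails:
  assumes y: "y \<in> {1/4<..<3/4}" and s: "0 < s" "s < 1/8" "s \<le> (1/2)^(K+1)"
    and likely: "\<forall>B\<in>sets M.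
      insensitive_beyond K (rounding_oracle (line_set y)) \<subseteq> B \<longrightarrow> 2 * p < measure M B"
    and \<phi>0: "\<phi>0 \<in> near_minimisers (line_set y)" and nrm0: "nrm0 \<in> {lone, ltwo, linf}"
    and unlikely: "measure M {\<omega>\<in>space M.
      nrm0 (vsub (\<Gamma> \<omega> (rounding_oracle (line_set y))) (map \<phi>0 (line_set y))) \<ge> 1/4 - 3*\<epsilon>h/4} \<le> p"
  shows "fails_on (split_set y s) (spliced_oracle K (line_set y) (split_set y s))"
  unfolding fails_on_def
proof (intro ballI)
  fix \<phi> nrm assume \<phi>: "\<phi> \<in> near_minimisers (split_set y s)" and nrm: "nrm \<in> {lone, ltwo, linf}"
  define Or0 where "Or0 = rounding_oracle (line_set y)"
  define Or where "Or = spliced_oracle K (line_set y) (split_set y s)"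
  define far0 where "far0 = {\<omega>\<in>space M. nrm0 (vsub (\<Gamma> \<omega> Or0) (map \<phi>0 (line_set y))) \<ge> 1/4 - 3*\<epsilon>h/4}"
  define far where "far = {\<omega>\<in>space M. nrm (vsub (\<Gamma> \<omega> Or) (map \<phi> (split_set y s))) \<ge> 1/4 - 3*\<epsilon>h/4}"
  have cube0: "set (line_set y) \<subseteq> cube d" and cube: "set (split_set y s) \<subseteq> cube d"
    using y s train_set_valid(2) by auto
  have "far0 \<in> sets M" unfolding far0_def Or0_def
    by (rule far_event_measurable[OF _ cube0 admissible_rounding_oracle[OF cube0] _ nrm0]) simp_all
  moreover have "far \<in> sets M" unfolding far_def Or_def
    by (rule far_event_measurable[OF _ cube admissible_spliced_split_set[OF y s] _ nrm]) simp_all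
  moreover have "\<phi>0 \<in> NN d Ns" using \<phi>0 by (simp add: near_minimisers_def argmin_eps_def)
  then obtain j where j: "j < r" "1/2 \<le> \<bar>\<phi>0 (line_set y ! j) - parity_bit (r + j)\<bar>"
    using NN_misfits_train_set_on_line[OF dim _ enough_points] by blast
  then have "insensitive_beyond K Or0 \<subseteq> far \<union> far0"
    using output_far_from_near_minimiser[where \<psi> = \<phi>0, OF y s j \<phi> nrm0 nrm]
    by (auto simp: far_def far0_def Or_def Or0_def insensitive_beyond_def not_le)
  ultimately have "p < measure M far"
    using likely unlikely by (intro measure_gt_of_likely_cover) (simp_all add: far0_def Or0_def)
  then show "measure M {\<omega>\<in>space M. nrm (vsub (\<Gamma> \<omega> Or) (map \<phi> (split_set y s))) \<ge> 1/4 - 3*\<epsilon>h/4} > p"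
    by (simp add: far_def)
qed

definition hard_family :: "real list list set \<Rightarrow> bool" where
  "hard_family C2 \<longleftrightarrow> uncountable C2 \<and> C2 \<subseteq> S (class_fn a) d (eps' r) \<and>
     (\<forall>T\<in>C2. length T = r \<and> near_minimisers T \<noteq> {} \<and> (\<exists>Or. admissible_oracle d T Or \<and> fails_on T Or))"

lemma hard_family_image:
  assumes "uncountable I" "inj_on F I"
    and "\<And>x. x \<in> I \<Longrightarrow> F x \<in> S (class_fn a) d (eps' r) \<and> length (F x) = r \<and>
      (\<exists>Or. admissible_oracle d (F x) Or \<and> fails_on (F x) Or)"
  shows "hard_family (F ` I)"
  unfolding hard_family_def using assms near_minimisers_nonempty countable_image_inj_on by blast

lemma line_sets_hard:
  assumes "\<forall>y\<in>{1/4<..<3/4}. fails_on (line_set y) (rounding_oracle (line_set y))"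
  shows "\<exists>C2. hard_family C2"
proof -
  have inj: "inj_on line_set {1/4<..<3/4}"
  proof (rule inj_onI)
    fix y y' assume "line_set y = line_set y'"
    then have "line_set y ! 0 ! 1 = line_set y' ! 0 ! 1" by simp
    then show "y = y'" using three_le_r by (simp add: train_point_def)
  qed
  have valid: "line_set y \<in> S (class_fn a) d (eps' r) \<and> length (line_set y) = r \<and>
      (\<exists>Or. admissible_oracle d (line_set y) Or \<and> fails_on (line_set y) Or)"
    if "y \<in> {1/4<..<3/4}" for y
    using that assms train_set_valid[of y y] admissible_rounding_oracle[of "line_set y" d] by auto
  have "uncountable {1/4<..<(3/4::real)}" by (simp add: uncountable_open_interval)
  then show ?thesis using hard_family_image[OF _ inj valid] by blast
qed

lemma split_sets_hard:
  assumes y: "y \<in> {1/4<..<3/4}" and succeeds: "\<not> fails_on (line_set y) (rounding_oracle (line_set y))"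
  shows "\<exists>C2. hard_family C2"
proof -
  obtain \<phi>0 nrm0 where \<phi>0: "\<phi>0 \<in> near_minimisers (line_set y)" "nrm0 \<in> {lone, ltwo, linf}"
    "measure M {\<omega>\<in>space M.
       nrm0 (vsub (\<Gamma> \<omega> (rounding_oracle (line_set y))) (map \<phi>0 (line_set y))) \<ge> 1/4 - 3*\<epsilon>h/4} \<le> p"
    using succeeds unfolding fails_on_def by (auto simp: not_less)
  have cube: "set (line_set y) \<subseteq> cube d" using y train_set_valid(2) by simp
  obtain K where K: "\<forall>B\<in>sets M. insensitive_beyond K (rounding_oracle (line_set y)) \<subseteq> B \<longrightarrow>
      2 * p < measure M B"
    using insensitive_beyond_likely[OF length_train_set cube admissible_rounding_oracle[OF cube]] by blast
  define \<delta> :: real where "\<delta> = min (1/8) ((1/2)^(K+1))"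
  define i where "i = (if odd r then 0 else 1::nat)"
  have inj: "inj_on (split_set y) {0<..<\<delta>}"
  proof (rule inj_onI)
    fix s s' assume "split_set y s = split_set y s'"
    then have "split_set y s ! i ! 1 = split_set y s' ! i ! 1" by simp
    then show "s = s'" using three_le_r by (simp add: i_def train_point_def split: if_splits)
  qed
  have valid: "split_set y s \<in> S (class_fn a) d (eps' r) \<and> length (split_set y s) = r \<and>
      (\<exists>Or. admissible_oracle d (split_set y s) Or \<and> fails_on (split_set y s) Or)"
    if "s \<in> {0<..<\<delta>}" for s
  proof -
    have s: "0 < s" "s < 1/8" "s \<le> (1/2)^(K+1)" using that by (auto simp: \<delta>_def)
    then have "y - s \<in> {0..1}" "y \<in> {0..1}" using y by auto
    then show ?thesis
      using train_set_valid(1) admissible_spliced_split_set[OF y s] split_set_fails[OF y s K \<phi>0]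
      by auto
  qed
  have "uncountable {0<..<\<delta>}" by (simp add: uncountable_open_interval \<delta>_def)
  then show ?thesis using hard_family_image[OF _ inj valid] by blast
qed

lemma hard_training_sets: "\<exists>C2. hard_family C2"
  using line_sets_hard split_sets_hard by blast

end

theorem theorem3p4:
  fixes d :: nat
  assumes "d \<ge> 2"
  shows "\<exists>C1 :: (real list \<Rightarrow> real) set.
    uncountable ((\<lambda>f. restrict f (cube d)) ` C1) \<and> (\<forall>f\<in>C1. classification_fn d f) \<and>
    (\<forall>f\<in>C1. \<forall>(Ns::nat list) (r::nat) (\<epsilon>::real) (\<epsilon>h::real) R (M::(nat \<Rightarrow> bool) measure) \<Gamma> (p::real).
       Ns \<noteq> [] \<and> (\<forall>n\<in>set Ns. 0 < n) \<and> r \<ge> 3 * prod_list (map Suc Ns)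
       \<and> \<epsilon> > 0 \<and> 0 < \<epsilon>h \<and> \<epsilon>h < 1/2 \<and> R \<in> CF_eps r \<epsilon> \<epsilon>h
       \<and> randomised_algorithm M d r \<Gamma> \<and> 0 \<le> p \<and> p < 1/2 \<longrightarrow>
       (\<exists>C2. uncountable C2 \<and> C2 \<subseteq> S f d (eps' r) \<and>
          (\<forall>T\<in>C2. length T = r \<and>
             argmin_eps \<epsilon> (NN d Ns) (\<lambda>\<phi>. R (map \<phi> T) (map f T)) \<noteq> {} \<and>
             (\<exists>Or. admissible_oracle d T Or \<and>
                (\<forall>\<phi>\<in>argmin_eps \<epsilon> (NN d Ns) (\<lambda>\<phi>. R (map \<phi> T) (map f T)).
                   \<forall>nrm\<in>{lone, ltwo, linf}.
                     measure M {\<omega>\<in>space M. nrm (vsub (\<Gamma> \<omega> Or) (map \<phi> T)) \<ge> 1/4 - 3*\<epsilon>h/4} > p)))))"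
proof -
  define C1 where "C1 = class_fn ` {1/2<..<(1::real)}"
  show ?thesis
  proof (intro exI[of _ C1] conjI ballI allI impI, goal_cases)
    case 1
    show ?case unfolding C1_def using assms by (intro uncountable_restrict_class_fns) simp
  next
    case (2 f)
    then show ?case by (auto simp: C1_def classification_fn_class_fn)
  next
    case (3 f Ns r \<epsilon> \<epsilon>h R M \<Gamma> p)
    then obtain a where "1/2 < a" and f_eq: "f = class_fn a" by (auto simp: C1_def)
    interpret hard_learning_problem d Ns r \<epsilon> \<epsilon>h R M \<Gamma> p a
      using assms 3(2) \<open>1/2 < a\<close> by unfold_locales auto
    show ?case
      using hard_training_sets unfolding hard_family_def near_minimisers_def fails_on_def f_eq .
  qed
qed

end
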